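(* There exists a constant $C>0$ such that for every $\varrho>0$, $$\operatorname*{ess\,sup}_{|v-u_1|\le\varrho}\int_{|v'-u_1|\ge\varrho}k(v',v)\,dv'\le C.$$
   Context: Fix masses $m,m_1>0$, a constant restitution coefficient $\epsilon\in(0,1)$, a bulk velocity $u_1\in\mathbb R^3$ and a temperature $\vartheta_1>0$. Set $\alpha=\frac{m_1}{m+m_1}$, $\beta=\frac{1-\epsilon}{2}$, $\mu=\frac{1-2\alpha(1-\beta)}{\alpha(1-\beta)}$ (so $1+\mu>0$), and $k(v,v')=\big(\frac{m_1}{2\pi\vartheta_1}\big)^{1/2}|v-v'|^{-1}\exp\big\{-\frac{m_1}{8\vartheta_1}\big((1+\mu)|v-v'|+\frac{|v-u_1|^2-|v'-u_1|^2}{|v-v'|}\big)^2\big\}$. *)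

theory Defs
  imports "HOL-Analysis.Analysis" "HOL-Probability.Essential_Supremum"
begin

definition alpha_c :: "real \<Rightarrow> real \<Rightarrow> real" where
  "alpha_c m m1 = m1 / (m + m1)"

definition beta_c :: "real \<Rightarrow> real" where
  "beta_c eps = (1 - eps) / 2"

definition mu_c :: "real \<Rightarrow> real \<Rightarrow> real \<Rightarrow> real" where
  "mu_c m m1 eps =
     (1 - 2 * alpha_c m m1 * (1 - beta_c eps)) / (alpha_c m m1 * (1 - beta_c eps))"

text \<open>The kernel k(v,v') on R^3 (for v = v' the formula is undefined; this is a null set).\<close>
definition kern :: "real \<Rightarrow> real \<Rightarrow> real \<Rightarrow> real^3 \<Rightarrow> real \<Rightarrow> real^3 \<Rightarrow> real^3 \<Rightarrow> real" where
  "kern m m1 eps u1 th1 v v' =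
     sqrt (m1 / (2 * pi * th1)) * (1 / norm (v - v')) *
     exp (- (m1 / (8 * th1)) *
       ((1 + mu_c m m1 eps) * norm (v - v')
        + ((norm (v - u1))\<^sup>2 - (norm (v' - u1))\<^sup>2) / norm (v - v'))\<^sup>2)"

end

theory Submission
  imports Defs
begin

text \<open>
  For v in the ball and v' outside it, |v' - u1|^2 - |v - u1|^2 \<ge> 0, so the exponent of k(v',v) is
  at least (1 + \<mu>)^2 |v' - v|^2 (times m1/(8 \<vartheta>1)): the kernel is dominated by
  c |w|^-1 exp(-B |w|^2) with w = v' - v, uniformly in \<rho>.  This majorant is integrable on R^3.
  To avoid polar coordinates, 1/|w| is bounded by the product of the |w_i|^(-1/3) (off the null set
  of coordinate hyperplanes) and the Gaussian factorises, so Tonelli reduces integrability to the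
  one-dimensional integral of |t|^(-1/3) exp(-B t^2).
\<close>

lemma AE_lborel_coordinates_nonzero:
  "AE x in lborel. \<forall>i\<in>Basis. (x::'a::euclidean_space) \<bullet> i \<noteq> 0"
proof (rule eventually_ball_finite[OF finite_Basis], intro ballI)
  fix i :: 'a assume "i \<in> Basis"
  then have "{x::'a. x \<bullet> i = 0} \<in> null_sets lebesgue"
    using negligible_standard_hyperplane negligible_iff_null_sets by blast
  then have "{x::'a. x \<bullet> i = 0} \<in> null_sets lborel"
    by (subst null_sets_completion_iff[symmetric]) auto
  then show "AE x in lborel. x \<bullet> i \<noteq> 0"
    by (rule AE_I') auto
qed

lemma nn_integral_lborel_translate:
  fixes c :: "'a::euclidean_space"
  assumes [measurable]: "f \<in> borel_measurable borel"
  shows "(\<integral>\<^sup>+ x. f (x - c) \<partial>lborel) = (\<integral>\<^sup>+ x. f x \<partial>lborel)"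
  by (subst lborel_distr_plus[of c, symmetric]) (simp add: nn_integral_distr)

lemma inverse_norm_le_prod_abs_powr:
  fixes x :: "'a::euclidean_space"
  assumes "\<forall>i\<in>Basis. x \<bullet> i \<noteq> 0"
  shows "1 / norm x \<le> (\<Prod>i\<in>Basis. \<bar>x \<bullet> i\<bar> powr (-1 / DIM('a)))"
proof -
  have "x \<noteq> 0" using assms SOME_Basis by fastforce
  then have "1 / norm x = (norm x powr (-1 / DIM('a))) ^ DIM('a)"
    by (subst powr_power) (auto simp: powr_minus_divide)
  also have "\<dots> = (\<Prod>i\<in>(Basis::'a set). norm x powr (-1 / DIM('a)))"
    by simp
  also have "\<dots> \<le> (\<Prod>i\<in>Basis. \<bar>x \<bullet> i\<bar> powr (-1 / DIM('a)))"
    using assms by (intro prod_mono conjI powr_mono2') (auto simp: Basis_le_norm)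
  finally show ?thesis .
qed

lemma exp_norm_sq_eq_prod:
  fixes x :: "'a::euclidean_space"
  shows "exp (- B * (norm x)\<^sup>2) = (\<Prod>i\<in>Basis. exp (- B * (x \<bullet> i)\<^sup>2))"
proof -
  have "(norm x)\<^sup>2 = (\<Sum>i\<in>Basis. (x \<bullet> i)\<^sup>2)"
    unfolding power2_norm_eq_inner euclidean_inner[of x x] by (simp add: power2_eq_square)
  then show ?thesis
    by (simp add: sum_distrib_left exp_sum)
qed

lemma powr_gaussian_le_majorant:
  fixes p B s :: real
  assumes "0 \<le> p" "0 < B" "0 \<le> s"
  shows "s powr (-p) * exp (- B * s\<^sup>2) \<le> indicator {0..1} s * s powr (-p) + indicator {1..} s * (s powr (-2) / B)"
proof (cases "s \<le> 1")
  case True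
  have "s powr (-p) * exp (- B * s\<^sup>2) \<le> s powr (-p)"
    using assms by (intro mult_left_le) auto
  also have "\<dots> \<le> indicator {0..1} s * s powr (-p) + indicator {1..} s * (s powr (-2) / B)"
    using True assms by (simp add: indicator_def)
  finally show ?thesis .
next
  case False
  have "s powr (-p) \<le> s powr 0"
    using False assms by (intro powr_mono) auto
  then have powr_le_1: "s powr (-p) \<le> 1"
    using False by simp
  have "B * s\<^sup>2 \<le> exp (B * s\<^sup>2)"
    using exp_ge_add_one_self[of "B * s\<^sup>2"] by linarith
  then have "exp (- B * s\<^sup>2) \<le> 1 / (B * s\<^sup>2)"
    using False assms by (simp add: exp_minus field_simps)
  also have "\<dots> = s powr (-2) / B"
    using False by (simp add: powr_minus_divide powr_realpow)
  finally have "s powr (-p) * exp (- B * s\<^sup>2) \<le> 1 * (s powr (-2) / B)"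
    using powr_le_1 by (intro mult_mono) auto
  then show ?thesis
    using False by simp
qed

lemma nn_integral_abs_powr_gaussian_finite:
  fixes p B :: real
  assumes "0 \<le> p" "p < 1" "B > 0"
  shows "(\<integral>\<^sup>+ t. ennreal (\<bar>t\<bar> powr (-p) * exp (- B * t\<^sup>2)) \<partial>lborel) < \<infinity>"
proof -
  define g :: "real \<Rightarrow> real" where
    "g s = indicator {0..1} s * s powr (-p) + indicator {1..} s * (s powr (-2) / B)" for s
  have g_measurable[measurable]: "g \<in> borel_measurable borel"
    unfolding g_def by measurable
  have g_nonneg: "0 \<le> g s" for s
    using assms by (simp add: g_def)
  have integral_0_1: "((\<lambda>s. s powr (-p)) has_integral 1 / (1 - p)) {0..1}"
    using has_integral_powr_from_0[of "-p" 1] assms by simp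
  have integral_1_inf: "((\<lambda>s. s powr (-2) / B) has_integral 1 / B) {1..}"
    using has_integral_divide[OF has_integral_powr_to_inf[of "-2" 1], of B] by simp
  have int_0_1: "(\<integral>\<^sup>+ s. ennreal (indicator {0..1} s * s powr (-p)) \<partial>lborel) = ennreal (1 / (1 - p))"
    by (rule nn_integral_has_integral_lebesgue[OF _ integral_0_1]) simp
  have int_1_inf: "(\<integral>\<^sup>+ s. ennreal (indicator {1..} s * (s powr (-2) / B)) \<partial>lborel) = ennreal (1 / B)"
    by (rule nn_integral_has_integral_lebesgue[OF _ integral_1_inf]) (use assms in simp)
  have "(\<integral>\<^sup>+ s. ennreal (g s) \<partial>lborel)
      = (\<integral>\<^sup>+ s. ennreal (indicator {0..1} s * s powr (-p)) + ennreal (indicator {1..} s * (s powr (-2) / B)) \<partial>lborel)"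
    unfolding g_def using assms by (intro nn_integral_cong ennreal_plus) auto
  also have "\<dots> = ennreal (1 / (1 - p)) + ennreal (1 / B)"
    unfolding int_0_1[symmetric] int_1_inf[symmetric] by (rule nn_integral_add) auto
  finally have g_finite: "(\<integral>\<^sup>+ s. ennreal (g s) \<partial>lborel) < \<infinity>"
    by simp
  have "(\<integral>\<^sup>+ t. ennreal (\<bar>t\<bar> powr (-p) * exp (- B * t\<^sup>2)) \<partial>lborel)
      \<le> (\<integral>\<^sup>+ t. ennreal (g t) + ennreal (g (-t)) \<partial>lborel)"
  proof (intro nn_integral_mono)
    fix t :: real
    have "g \<bar>t\<bar> \<le> g t + g (-t)"
      using g_nonneg[of t] g_nonneg[of "-t"] by (cases "t \<ge> 0") auto
    then show "ennreal (\<bar>t\<bar> powr (-p) * exp (- B * t\<^sup>2)) \<le> ennreal (g t) + ennreal (g (-t))"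
      using powr_gaussian_le_majorant[of p B "\<bar>t\<bar>"] assms g_nonneg by (simp add: g_def flip: ennreal_plus)
  qed
  also have "\<dots> = (\<integral>\<^sup>+ t. ennreal (g t) \<partial>lborel) + (\<integral>\<^sup>+ t. ennreal (g (-t)) \<partial>lborel)"
    by (rule nn_integral_add) auto
  also have "(\<integral>\<^sup>+ t. ennreal (g (-t)) \<partial>lborel) = (\<integral>\<^sup>+ t. ennreal (g t) \<partial>lborel)"
    using nn_integral_real_affine[of "\<lambda>t. ennreal (g t)" "-1" 0] by simp
  finally show ?thesis
    using g_finite by (simp add: order_le_less_trans)
qed

definition gauss_over_norm :: "real \<Rightarrow> 'a::real_normed_vector \<Rightarrow> real" where
  "gauss_over_norm B x = exp (- B * (norm x)\<^sup>2) / norm x"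

lemma gauss_over_norm_measurable[measurable]: "gauss_over_norm B \<in> borel_measurable borel"
  unfolding gauss_over_norm_def by measurable

lemma nn_integral_gauss_over_norm_finite:
  fixes B :: real
  assumes "B > 0" and "DIM('a::euclidean_space) \<ge> 2"
  shows "(\<integral>\<^sup>+ (x::'a). ennreal (gauss_over_norm B x) \<partial>lborel) < \<infinity>"
proof -
  define p :: real where "p = 1 / DIM('a)"
  define f where "f t = ennreal (\<bar>t\<bar> powr (-p) * exp (- B * t\<^sup>2))" for t :: real
  have "(\<integral>\<^sup>+ (x::'a). ennreal (gauss_over_norm B x) \<partial>lborel)
      \<le> (\<integral>\<^sup>+ (x::'a). (\<Prod>i\<in>Basis. f (x \<bullet> i)) \<partial>lborel)"
  proof (rule nn_integral_mono_AE)
    show "AE (x::'a) in lborel. ennreal (gauss_over_norm B x) \<le> (\<Prod>i\<in>Basis. f (x \<bullet> i))"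
      using AE_lborel_coordinates_nonzero
    proof eventually_elim
      case (elim x)
      have "gauss_over_norm B x
          \<le> (\<Prod>i\<in>Basis. \<bar>x \<bullet> i\<bar> powr (-p)) * (\<Prod>i\<in>Basis. exp (- B * (x \<bullet> i)\<^sup>2))"
        unfolding gauss_over_norm_def exp_norm_sq_eq_prod[symmetric] divide_inverse mult.commute[of "exp _"]
        using inverse_norm_le_prod_abs_powr[OF elim] by (intro mult_right_mono) (auto simp: p_def inverse_eq_divide)
      then show ?case
        by (simp add: f_def prod_ennreal prod.distrib ennreal_leI)
    qed
  qed
  also have "\<dots> = (\<Prod>i\<in>(Basis::'a set). \<integral>\<^sup>+ t. f t \<partial>lborel)"
    by (rule nn_integral_lborel_prod) (auto simp: f_def)
  also have "\<dots> < \<infinity>"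
    using nn_integral_abs_powr_gaussian_finite[of p B] assms
    by (simp add: power_less_top_ennreal p_def f_def)
  finally show ?thesis .
qed

lemma one_plus_mu_c_pos:
  assumes "0 < m" "0 < m1" "-1 < eps" "eps \<le> 1"
  shows "0 < 1 + mu_c m m1 eps"
proof -
  define a where "a = alpha_c m m1"
  define c where "c = 1 - beta_c eps"
  have a: "0 < a" "a < 1" and c: "0 < c" "c \<le> 1"
    using assms by (auto simp: a_def c_def alpha_c_def beta_c_def)
  then have ac: "0 < a * c" "a * c < 1"
    by (auto intro: mult_less_le_imp_less[of a 1 c 1, simplified])
  have "1 + mu_c m m1 eps = (1 - a * c) / (a * c)"
    using a c by (simp add: mu_c_def a_def[symmetric] c_def[symmetric] field_simps)
  then show ?thesis
    using ac by simp
qed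

(* No hypothesis v' \<noteq> v is needed: for v' = v both sides are 0, as division by 0 yields 0. *)
lemma kern_le_gauss_over_norm:
  assumes "0 < m1" "0 < th1" "0 \<le> 1 + mu_c m m1 eps"
    and "norm (v - u1) \<le> norm (v' - u1)"
  shows "kern m m1 eps u1 th1 v' v
    \<le> sqrt (m1 / (2 * pi * th1)) * gauss_over_norm (m1 / (8 * th1) * (1 + mu_c m m1 eps)\<^sup>2) (v' - v)"
proof -
  define r where "r = norm (v' - v)"
  define M where "M = 1 + mu_c m m1 eps"
  define d where "d = (norm (v' - u1))\<^sup>2 - (norm (v - u1))\<^sup>2"
  have "0 \<le> d"
    using assms(4) by (simp add: d_def power_mono)
  then have "(M * r)\<^sup>2 \<le> (M * r + d / r)\<^sup>2"
    using assms(3) by (intro power_mono) (auto simp: M_def r_def)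
  then have "m1 / (8 * th1) * (M * r)\<^sup>2 \<le> m1 / (8 * th1) * (M * r + d / r)\<^sup>2"
    using assms(1,2) by (intro mult_left_mono) auto
  then have "exp (- (m1 / (8 * th1)) * (M * r + d / r)\<^sup>2) \<le> exp (- (m1 / (8 * th1) * M\<^sup>2) * r\<^sup>2)"
    by (simp add: power_mult_distrib mult.assoc)
  then have "sqrt (m1 / (2 * pi * th1)) * (1 / r) * exp (- (m1 / (8 * th1)) * (M * r + d / r)\<^sup>2)
      \<le> sqrt (m1 / (2 * pi * th1)) * (1 / r) * exp (- (m1 / (8 * th1) * M\<^sup>2) * r\<^sup>2)"
    using assms(1,2) by (intro mult_left_mono) (auto simp: r_def)
  then show ?thesis
    unfolding kern_def gauss_over_norm_def r_def[symmetric] M_def[symmetric] d_def[symmetric] by simp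
qed

lemma nn_integral_kern_outside_ball_le:
  fixes v u1 :: "real^3"
  assumes "0 < m1" "0 < th1" "0 \<le> 1 + mu_c m m1 eps" "v \<in> cball u1 \<rho>"
  shows "(\<integral>\<^sup>+ v'. ennreal (kern m m1 eps u1 th1 v' v) * indicator {v'. norm (v' - u1) \<ge> \<rho>} v' \<partial>lborel)
    \<le> ennreal (sqrt (m1 / (2 * pi * th1)))
        * (\<integral>\<^sup>+ (x::real^3). ennreal (gauss_over_norm (m1 / (8 * th1) * (1 + mu_c m m1 eps)\<^sup>2) x) \<partial>lborel)"
proof -
  define B where "B = m1 / (8 * th1) * (1 + mu_c m m1 eps)\<^sup>2"
  define c where "c = sqrt (m1 / (2 * pi * th1))"
  have v: "norm (v - u1) \<le> \<rho>"
    using assms(4) by (simp add: dist_norm norm_minus_commute)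
  have "(\<integral>\<^sup>+ v'. ennreal (kern m m1 eps u1 th1 v' v) * indicator {v'. norm (v' - u1) \<ge> \<rho>} v' \<partial>lborel)
      \<le> (\<integral>\<^sup>+ v'. ennreal c * ennreal (gauss_over_norm B (v' - v)) \<partial>lborel)"
  proof (rule nn_integral_mono)
    fix v' :: "real^3"
    show "ennreal (kern m m1 eps u1 th1 v' v) * indicator {v'. norm (v' - u1) \<ge> \<rho>} v'
      \<le> ennreal c * ennreal (gauss_over_norm B (v' - v))"
    proof (cases "norm (v' - u1) \<ge> \<rho>")
      case True
      then have "kern m m1 eps u1 th1 v' v \<le> c * gauss_over_norm B (v' - v)"
        using kern_le_gauss_over_norm[of m1 th1 m eps v u1 v'] assms v by (simp add: B_def c_def)
      then show ?thesis
        using True assms(1,2) by (simp add: c_def ennreal_leI flip: ennreal_mult')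
    qed simp
  qed
  also have "\<dots> = ennreal c * (\<integral>\<^sup>+ v'. ennreal (gauss_over_norm B (v' - v)) \<partial>lborel)"
    by (rule nn_integral_cmult) simp
  also have "(\<integral>\<^sup>+ v'. ennreal (gauss_over_norm B (v' - v)) \<partial>lborel)
      = (\<integral>\<^sup>+ (x::real^3). ennreal (gauss_over_norm B x) \<partial>lborel)"
    by (rule nn_integral_lborel_translate) simp
  finally show ?thesis
    unfolding B_def c_def .
qed

lemma esssup_kern_outside_ball_le:
  fixes u1 :: "real^3"
  assumes "0 < m1" "0 < th1" "0 \<le> 1 + mu_c m m1 eps"
  shows "esssup (restrict_space lborel (cball u1 \<rho>))
      (\<lambda>v. \<integral>\<^sup>+ v'. ennreal (kern m m1 eps u1 th1 v' v) * indicator {v'. norm (v' - u1) \<ge> \<rho>} v' \<partial>lborel)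
    \<le> ennreal (sqrt (m1 / (2 * pi * th1)))
        * (\<integral>\<^sup>+ (x::real^3). ennreal (gauss_over_norm (m1 / (8 * th1) * (1 + mu_c m m1 eps)\<^sup>2) x) \<partial>lborel)"
proof (rule esssup_I)
  show "(\<lambda>v. \<integral>\<^sup>+ v'. ennreal (kern m m1 eps u1 th1 v' v) * indicator {v'. norm (v' - u1) \<ge> \<rho>} v' \<partial>lborel)
      \<in> borel_measurable (restrict_space lborel (cball u1 \<rho>))"
    by (rule measurable_restrict_space1) (unfold kern_def, measurable)
qed (use nn_integral_kern_outside_ball_le[OF assms] in \<open>intro AE_I2, simp\<close>)

theorem proposition4p3:
  fixes m m1 eps th1 :: real and u1 :: "real^3"
  assumes "m > 0" and "m1 > 0" and "0 < eps" and "eps < 1" and "th1 > 0"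
  shows "\<exists>C::real. C > 0 \<and> (\<forall>\<rho>::real. \<rho> > 0 \<longrightarrow>
           esssup (restrict_space lborel (cball u1 \<rho>))
             (\<lambda>v. \<integral>\<^sup>+ v'. ennreal (kern m m1 eps u1 th1 v' v)
                      * indicator {v'. norm (v' - u1) \<ge> \<rho>} v' \<partial>lborel)
           \<le> ennreal C)"
proof -
  define B where "B = m1 / (8 * th1) * (1 + mu_c m m1 eps)\<^sup>2"
  define c where "c = sqrt (m1 / (2 * pi * th1))"
  have mu: "0 < 1 + mu_c m m1 eps"
    using one_plus_mu_c_pos assms by simp
  have c: "0 \<le> c"
    using assms by (simp add: c_def)
  have "(\<integral>\<^sup>+ (x::real^3). ennreal (gauss_over_norm B x) \<partial>lborel) < \<infinity>"
    using assms mu by (intro nn_integral_gauss_over_norm_finite) (auto simp: B_def)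
  then obtain I where I: "0 \<le> I"
    "(\<integral>\<^sup>+ (x::real^3). ennreal (gauss_over_norm B x) \<partial>lborel) = ennreal I"
    by (cases rule: ennreal_cases) auto
  have "esssup (restrict_space lborel (cball u1 \<rho>))
          (\<lambda>v. \<integral>\<^sup>+ v'. ennreal (kern m m1 eps u1 th1 v' v) * indicator {v'. norm (v' - u1) \<ge> \<rho>} v' \<partial>lborel)
        \<le> ennreal c * ennreal I" for \<rho>
    using esssup_kern_outside_ball_le[of m1 th1 m eps u1 \<rho>] assms mu I unfolding B_def c_def by simp
  moreover have "ennreal c * ennreal I \<le> ennreal (c * I + 1)"
    using c I(1) by (simp add: ennreal_leI flip: ennreal_mult)
  moreover have "0 < c * I + 1"
    using c I(1) by (simp add: add_nonneg_pos)
  ultimately show ?thesis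
    by (meson order_trans)
qed

end
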